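(* Let $X \in \Lambda^2_{14} = \mathfrak{g}_2$. Then there exist a $\mathrm{G}_2$-adapted frame $\mathcal{B} = \{f_1,\dots,f_7\}$ and real numbers $\lambda\geq\nu\geq\mu\geq 0$ with $\lambda = \nu + \mu$ such that the matrix $[X]_{\mathcal{B}}$, whose $(i,j)$ entry is $X(f_i,f_j)$, is block diagonal with blocks $$ (0), \quad \begin{pmatrix} 0 & -\mu \\ \mu & 0\end{pmatrix}, \quad \begin{pmatrix} 0 & -\nu \\ \nu & 0\end{pmatrix}, \quad \begin{pmatrix} 0 & -\lambda \\ \lambda & 0\end{pmatrix} $$ (in this order, occupying indices $\{1\},\{2,3\},\{4,5\},\{6,7\}$), with all other entries zero. Moreover, exactly three cases occur: (i) if $\lambda=\mu$, then $\lambda=\mu=\nu=0$ and $X=0$; (ii) if $\lambda>0$ and $\mu=0$, then $\lambda=\nu$, $\operatorname{rank}X = 4$, and $\ker X$ is the associative $3$-plane spanned by $\{f_1,f_2,f_3\}$; (iii) if $\lambda>\mu>0$, then $\operatorname{rank}X=6$ and $\ker X$ is spanned by $f_1$.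
   Context: Equip $\mathbb{R}^7$ with its standard inner product, orientation and basis. Let $\varphi = e_{123} - e_{167} - e_{527} - e_{563} - e_{415} - e_{426} - e_{437}$ ($e_{ijk} = e_i\wedge e_j\wedge e_k$) and define $\times$ by $\langle u\times v,w\rangle = \varphi(u,v,w)$. A skew bilinear form $X$ is identified with the operator $X$ given by $X(a,b)=\langle X(a),b\rangle$. $\Lambda^2_{14}=\mathfrak{g}_2$ is the set of skew bilinear forms $X$ with $X(v\times w) = X(v)\times w + v\times X(w)$ for all $v,w$. A $\mathrm{G}_2$-adapted frame is an oriented orthonormal basis $\{f_1,\dots,f_7\}$ with $f_3 = f_1\times f_2$, $f_5 = f_1\times f_4$, $f_6 = f_2\times f_4$, $f_7 = f_3\times f_4$. A $3$-dimensional subspace is associative if closed under $\times$. *)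

theory Defs
  imports "HOL-Analysis.Analysis"
begin

text \<open>Coordinates of R^7 are indexed by the numeral type 7; the paper's index i in {1..7}
  corresponds to ix i = of_nat (i - 1) (a bijection {1..7} -> UNIV::7).\<close>

definition ix :: "nat \<Rightarrow> 7" where
  "ix i = of_nat (i - 1)"

definition e :: "nat \<Rightarrow> real^7" where
  "e i = axis (ix i) 1"

text \<open>e_{ijk}(u,v,w) = det of the 3x3 matrix of the i,j,k components of u,v,w\<close>
definition e3 :: "nat \<Rightarrow> nat \<Rightarrow> nat \<Rightarrow> real^7 \<Rightarrow> real^7 \<Rightarrow> real^7 \<Rightarrow> real" where
  "e3 i j k u v w =
     u$ix i * (v$ix j * w$ix k - v$ix k * w$ix j)
   - u$ix j * (v$ix i * w$ix k - v$ix k * w$ix i)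
   + u$ix k * (v$ix i * w$ix j - v$ix j * w$ix i)"

definition phi :: "real^7 \<Rightarrow> real^7 \<Rightarrow> real^7 \<Rightarrow> real" where
  "phi u v w = e3 1 2 3 u v w - e3 1 6 7 u v w - e3 5 2 7 u v w - e3 5 6 3 u v w
             - e3 4 1 5 u v w - e3 4 2 6 u v w - e3 4 3 7 u v w"

text \<open>cross product: the unique vector with <u x v, w> = phi(u,v,w)\<close>
definition cross7 :: "real^7 \<Rightarrow> real^7 \<Rightarrow> real^7" where
  "cross7 u v = (\<chi> k. phi u v (axis k 1))"

text \<open>A skew bilinear form X(a,b) = <X a, b> is represented by the matrix X (operator a \<mapsto> X *v a).\<close>
definition skew :: "real^7^7 \<Rightarrow> bool" where
  "skew X \<longleftrightarrow> transpose X = - X"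

definition g2 :: "(real^7^7) set" where
  "g2 = {X. skew X \<and>
         (\<forall>v w. X *v cross7 v w = cross7 (X *v v) w + cross7 v (X *v w))}"

text \<open>Oriented: the matrix with rows f_1..f_7
  (in coordinates e_1..e_7) has positive determinant (rows and columns are re-indexed by the same
  bijection ix, which does not change the determinant).\<close>
definition g2_adapted :: "(7 \<Rightarrow> real^7) \<Rightarrow> bool" where
  "g2_adapted f \<longleftrightarrow>
     (\<forall>a b. f a \<bullet> f b = (if a = b then 1 else 0)) \<and>
     det (\<chi> a. f a) > 0 \<and>
     f (ix 3) = cross7 (f (ix 1)) (f (ix 2)) \<and>
     f (ix 5) = cross7 (f (ix 1)) (f (ix 4)) \<and>
     f (ix 6) = cross7 (f (ix 2)) (f (ix 4)) \<and>
     f (ix 7) = cross7 (f (ix 3)) (f (ix 4))"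

definition associative :: "(real^7) set \<Rightarrow> bool" where
  "associative V \<longleftrightarrow> subspace V \<and> dim V = 3 \<and> (\<forall>u\<in>V. \<forall>v\<in>V. cross7 u v \<in> V)"

definition normal_form :: "real \<Rightarrow> real \<Rightarrow> real \<Rightarrow> nat \<Rightarrow> nat \<Rightarrow> real" where
  "normal_form mu nu lam i j =
     (if (i, j) = (2, 3) then - mu else if (i, j) = (3, 2) then mu
      else if (i, j) = (4, 5) then - nu else if (i, j) = (5, 4) then nu
      else if (i, j) = (6, 7) then - lam else if (i, j) = (7, 6) then lam
      else 0)"

end

theory Submission
  imports Defs
begin

text \<open>A skew map of odd size has a unit vector \<open>a\<close> in its kernel. As \<open>X\<close> is a derivation
  of the cross product killing \<open>a\<close>, the twist \<open>v \<mapsto> a \<times> X v\<close> is symmetric and commutes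
  with \<open>a \<times> -\<close>. A maximal eigenvector \<open>c\<close> of the twist on \<open>a\<^sup>\<bottom>\<close> and a maximal one \<open>b\<close>
  orthogonal to \<open>a, c, a \<times> c\<close> form a special triple \<open>(a, b, c)\<close>, and on the frame it
  generates \<open>X\<close> rotates the three planes at rates \<open>mu \<le> nu\<close> and, by the derivation
  property, \<open>mu + nu\<close>. Should \<open>mu\<close> be negative, the triple \<open>(- a, b, b \<times> c)\<close> has rates
  \<open>- mu\<close> and \<open>mu + nu\<close>, where \<open>- mu \<le> mu + nu\<close> because \<open>b \<times> c\<close> competes with \<open>b\<close>
  in the maximality of \<open>mu\<close>.

  Such frames are positively oriented: their determinant is \<open>\<plusminus>1\<close> and depends
  continuously on the triple, which can be moved to the standard one.
  Kernel and rank are then read off from the normal form.\<close>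

section \<open>Coordinates and the cross product\<close>

lemma UNIV_7: "(UNIV::7 set) = {0, 1, 2, 3, 4, 5, 6}"
proof -
  have "card ({0, 1, 2, 3, 4, 5, 6}::7 set) = 7" by simp
  then have "{0, 1, 2, 3, 4, 5, 6} = (UNIV::7 set)" by (intro card_subset_eq) auto
  then show ?thesis by simp
qed

lemma all_7: "(\<forall>i::7. P i) \<longleftrightarrow> P 0 \<and> P 1 \<and> P 2 \<and> P 3 \<and> P 4 \<and> P 5 \<and> P 6"
  by (metis UNIV_7 UNIV_I insertE singletonD)

lemma sum_7: "sum (g::7 \<Rightarrow> 'a::comm_monoid_add) UNIV = g 0 + (g 1 + (g 2 + (g 3 + (g 4 + (g 5 + g 6)))))"
  unfolding UNIV_7 by simp

lemma prod_7: "prod (g::7 \<Rightarrow> 'a::comm_monoid_mult) UNIV = g 0 * (g 1 * (g 2 * (g 3 * (g 4 * (g 5 * g 6)))))"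
  unfolding UNIV_7 by simp

lemma inner_vec_7:
  "(x::real^7) \<bullet> y = x$0*y$0 + (x$1*y$1 + (x$2*y$2 + (x$3*y$3 + (x$4*y$4 + (x$5*y$5 + x$6*y$6)))))"
  unfolding inner_vec_def sum_7 by simp

lemma vec_eq_7:
  "(x::real^7) = y \<longleftrightarrow> x$0 = y$0 \<and> x$1 = y$1 \<and> x$2 = y$2 \<and> x$3 = y$3 \<and> x$4 = y$4 \<and> x$5 = y$5 \<and> x$6 = y$6"
  by (simp add: vec_eq_iff all_7)

lemma ix_values: "ix 1 = 0" "ix (Suc 0) = 0" "ix 2 = 1" "ix 3 = 2" "ix 4 = 3" "ix 5 = 4" "ix 6 = 5" "ix 7 = 6"
  by (simp_all add: ix_def)

lemma ball_1_7: "(\<forall>i\<in>{1..7::nat}. P i) \<longleftrightarrow> P 1 \<and> P 2 \<and> P 3 \<and> P 4 \<and> P 5 \<and> P 6 \<and> P 7"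
proof -
  have "{1..7::nat} = {1, 2, 3, 4, 5, 6, 7}" by auto
  then show ?thesis by simp
qed

lemma cross7_components:
  "cross7 u v $ 0 = u$1 * v$2 - u$2 * v$1 + u$3 * v$4 - u$4 * v$3 - u$5 * v$6 + u$6 * v$5"
  "cross7 u v $ 1 = - u$0 * v$2 + u$2 * v$0 + u$3 * v$5 + u$4 * v$6 - u$5 * v$3 - u$6 * v$4"
  "cross7 u v $ 2 = u$0 * v$1 - u$1 * v$0 + u$3 * v$6 - u$4 * v$5 + u$5 * v$4 - u$6 * v$3"
  "cross7 u v $ 3 = - u$0 * v$4 - u$1 * v$5 - u$2 * v$6 + u$4 * v$0 + u$5 * v$1 + u$6 * v$2"
  "cross7 u v $ 4 = u$0 * v$3 - u$1 * v$6 + u$2 * v$5 - u$3 * v$0 - u$5 * v$2 + u$6 * v$1"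
  "cross7 u v $ 5 = u$0 * v$6 + u$1 * v$3 - u$2 * v$4 - u$3 * v$1 + u$4 * v$2 - u$6 * v$0"
  "cross7 u v $ 6 = - u$0 * v$5 + u$1 * v$4 + u$2 * v$3 - u$3 * v$2 - u$4 * v$1 + u$5 * v$0"
  by (simp_all add: cross7_def phi_def e3_def ix_def axis_def)

lemma cross7_add_left: "cross7 (u + w) v = cross7 u v + cross7 w v"
  and cross7_add_right: "cross7 v (u + w) = cross7 v u + cross7 v w"
  and cross7_scaleR_left: "cross7 (r *\<^sub>R u) v = r *\<^sub>R cross7 u v"
  and cross7_scaleR_right: "cross7 v (r *\<^sub>R u) = r *\<^sub>R cross7 v u"
  and cross7_minus_left: "cross7 (- u) v = - cross7 u v"
  and cross7_minus_right: "cross7 v (- u) = - cross7 v u"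
  unfolding vec_eq_7 by (simp_all add: cross7_components algebra_simps)

lemma cross7_zero_left [simp]: "cross7 0 v = 0"
  and cross7_zero_right [simp]: "cross7 v 0 = 0"
  unfolding vec_eq_7 by (simp_all add: cross7_components)

lemma cross7_anticomm: "cross7 v u = - cross7 u v"
  unfolding vec_eq_7 by (simp add: cross7_components)

lemma cross7_self [simp]: "cross7 u u = 0"
  unfolding vec_eq_7 by (simp add: cross7_components)

lemma linear_cross7_right: "linear (cross7 u)"
  by (rule linearI) (simp_all add: cross7_add_right cross7_scaleR_right)

lemma inner_cross7_cyclic: "cross7 u v \<bullet> w = cross7 v w \<bullet> u"
  unfolding inner_vec_7 cross7_components by algebra

lemma inner_cross7_swap: "cross7 u v \<bullet> w = - (cross7 u w \<bullet> v)"
  by (metis inner_cross7_cyclic cross7_anticomm inner_minus_left)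

lemma inner_cross7_left [simp]: "u \<bullet> cross7 u v = 0"
  and inner_cross7_right [simp]: "v \<bullet> cross7 u v = 0"
  and cross7_inner_left [simp]: "cross7 u v \<bullet> u = 0"
  and cross7_inner_right [simp]: "cross7 u v \<bullet> v = 0"
  unfolding inner_vec_7 cross7_components by algebra+

lemma inner_cross7_cross7:
  "cross7 u v \<bullet> cross7 u w = (u \<bullet> u) * (v \<bullet> w) - (u \<bullet> v) * (u \<bullet> w)"
  unfolding inner_vec_7 cross7_components by algebra

lemma cross7_cross7_same: "cross7 u (cross7 u v) = (u \<bullet> v) *\<^sub>R u - (u \<bullet> u) *\<^sub>R v"
  unfolding vec_eq_7 cross7_components inner_vec_7 vector_scaleR_component real_scaleR_def
    vector_minus_component
  by (intro conjI; algebra)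

lemma cross7_cross7_sym:
  "cross7 (cross7 a b) c + cross7 (cross7 a c) b = (a \<bullet> b) *\<^sub>R c + (a \<bullet> c) *\<^sub>R b - (2 * (b \<bullet> c)) *\<^sub>R a"
  unfolding vec_eq_7 cross7_components inner_vec_7 vector_scaleR_component real_scaleR_def
    vector_minus_component vector_add_component
  by (intro conjI; algebra)

lemma cross7_assoc_defect:
  "cross7 a (cross7 b c) + cross7 (cross7 a b) c = (2 * (a \<bullet> c)) *\<^sub>R b - (a \<bullet> b) *\<^sub>R c - (b \<bullet> c) *\<^sub>R a"
  unfolding vec_eq_7 cross7_components inner_vec_7 vector_scaleR_component real_scaleR_def
    vector_minus_component vector_add_component
  by (intro conjI; algebra)

lemma cross7_cross7_common:
  "cross7 (cross7 a b) (cross7 a c) =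
     (2 * (cross7 a b \<bullet> c)) *\<^sub>R a + (a \<bullet> b) *\<^sub>R cross7 a c - (a \<bullet> c) *\<^sub>R cross7 a b - (a \<bullet> a) *\<^sub>R cross7 b c"
  unfolding vec_eq_7 cross7_components inner_vec_7 vector_scaleR_component real_scaleR_def
    vector_minus_component vector_add_component
  by (intro conjI; algebra)

section \<open>Orthonormal frames and skew maps\<close>

definition orthonormal_frame :: "('n \<Rightarrow> real^'n) \<Rightarrow> bool" where
  "orthonormal_frame f \<longleftrightarrow> (\<forall>i j. f i \<bullet> f j = (if i = j then 1 else 0))"

lemma orthonormal_frame_orthogonal_matrix:
  assumes "orthonormal_frame f"
  shows "orthogonal_matrix (\<chi> i. f i)"
proof -
  have "(\<chi> i. f i) ** transpose (\<chi> i. f i) = mat 1"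
    using assms
    by (simp add: orthonormal_frame_def vec_eq_iff matrix_matrix_mult_def transpose_def mat_def
        inner_vec_def)
  then show ?thesis
    by (simp add: orthogonal_matrix_def matrix_left_right_inverse)
qed

lemma orthonormal_frame_expansion:
  assumes "orthonormal_frame f"
  shows "v = (\<Sum>i\<in>UNIV. (f i \<bullet> v) *\<^sub>R f i)"
proof -
  let ?F = "\<chi> i. f i"
  have "transpose ?F ** ?F = mat 1"
    using orthonormal_frame_orthogonal_matrix[OF assms] by (simp add: orthogonal_matrix_def)
  then have "v = transpose ?F *v (?F *v v)"
    by (metis matrix_vector_mul_assoc matrix_vector_mul_lid)
  also have "\<dots> = (\<Sum>i\<in>UNIV. (f i \<bullet> v) *\<^sub>R f i)"
    by (simp add: vec_eq_iff matrix_vector_mult_def transpose_def inner_vec_def mult.commute)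
  finally show ?thesis .
qed

lemma orthonormal_frame_in_span:
  assumes "orthonormal_frame f" and "\<And>i. i \<notin> I \<Longrightarrow> f i \<bullet> v = 0"
  shows "v \<in> span (f ` I)"
proof -
  have "(f i \<bullet> v) *\<^sub>R f i \<in> span (f ` I)" for i
    by (cases "i \<in> I") (simp_all add: assms(2) span_zero span_base span_scale)
  then have "(\<Sum>i\<in>UNIV. (f i \<bullet> v) *\<^sub>R f i) \<in> span (f ` I)"
    by (intro span_sum)
  then show ?thesis
    using orthonormal_frame_expansion[OF assms(1)] by simp
qed

lemma dim_orthonormal_frame:
  assumes "orthonormal_frame f"
  shows "dim (f ` I) = card I"
proof -
  have unit: "f i \<bullet> f j = (if i = j then 1 else 0)" for i j
    using assms by (simp add: orthonormal_frame_def)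
  have inj: "inj f"
  proof (rule injI)
    fix i j assume "f i = f j"
    then have "f i \<bullet> f j = 1" using unit[of j j] by simp
    then show "i = j" using unit[of i j] by (simp split: if_splits)
  qed
  have nz: "f i \<noteq> 0" for i
    using unit[of i i] by auto
  have "independent (f ` I)"
  proof (rule pairwise_orthogonal_independent)
    show "pairwise orthogonal (f ` I)"
      using inj by (auto simp: pairwise_def orthogonal_def unit)
    show "0 \<notin> f ` I" using nz by auto
  qed
  moreover have "inj_on f I"
    using inj by (simp add: inj_on_def)
  ultimately show ?thesis
    by (simp add: dim_eq_card_independent card_image)
qed

lemma skew_inner:
  fixes X :: "real^'n^'n"
  assumes "transpose X = - X"
  shows "(X *v u) \<bullet> v = - (u \<bullet> (X *v v))"
proof -
  have "(X *v u) \<bullet> v = (v v* X) \<bullet> u"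
    by (metis dot_lmul_matrix inner_commute)
  also have "v v* X = transpose X *v v"
    by (metis transpose_transpose vector_transpose_matrix)
  also have "transpose X *v v = - (X *v v)"
    using assms by (simp add: vec_eq_iff matrix_vector_mult_def sum_negf)
  finally show ?thesis by (simp add: inner_commute)
qed

text \<open>Kernel and range of a skew map are orthogonal complements.\<close>

lemma skew_kernel_rank_frame:
  fixes X :: "real^'n^'n"
  assumes frame: "orthonormal_frame f" and skew: "transpose X = - X"
    and hit: "\<And>i. i \<in> J \<Longrightarrow> f i \<in> range ((*v) X)"
    and killed: "\<And>i. i \<notin> J \<Longrightarrow> X *v f i = 0"
  shows "{v. X *v v = 0} = span (f ` (- J))" and "rank X = card J"
proof -
  have lin: "linear ((*v) X)" by (rule matrix_vector_mul_linear)
  show "{v. X *v v = 0} = span (f ` (- J))"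
  proof
    show "{v. X *v v = 0} \<subseteq> span (f ` (- J))"
    proof
      fix v assume "v \<in> {v. X *v v = 0}"
      then have "f i \<bullet> v = 0" if "i \<in> J" for i
        using hit[OF that] skew_inner[OF skew] by auto
      then show "v \<in> span (f ` (- J))"
        by (intro orthonormal_frame_in_span[OF frame]) simp
    qed
    show "span (f ` (- J)) \<subseteq> {v. X *v v = 0}"
      by (rule span_minimal) (use killed linear_subspace_kernel[OF lin] in auto)
  qed
  have "range ((*v) X) = span (f ` J)"
  proof
    show "range ((*v) X) \<subseteq> span (f ` J)"
    proof clarify
      fix w
      have "f i \<bullet> (X *v w) = 0" if "i \<notin> J" for i
        using skew_inner[OF skew, of "f i" w] killed[OF that] by (simp add: inner_commute)
      then show "X *v w \<in> span (f ` J)"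
        by (intro orthonormal_frame_in_span[OF frame]) simp
    qed
    show "span (f ` J) \<subseteq> range ((*v) X)"
      by (rule span_minimal) (use hit linear_subspace_image[OF lin subspace_UNIV] in auto)
  qed
  then show "rank X = card J"
    by (simp add: rank_dim_range dim_orthonormal_frame[OF frame])
qed

lemma rotation_pair_in_range:
  fixes X :: "real^'n^'n"
  assumes "X *v u = - s *\<^sub>R w" and "X *v w = s *\<^sub>R u" and "s \<noteq> 0"
  shows "u \<in> range ((*v) X)" and "w \<in> range ((*v) X)"
proof -
  have "u = X *v ((1 / s) *\<^sub>R w)" and "w = X *v ((- 1 / s) *\<^sub>R u)"
    unfolding matrix_vector_mult_scaleR using assms by simp_all
  then show "u \<in> range ((*v) X)" and "w \<in> range ((*v) X)" by (metis rangeI)+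
qed

lemma skew_odd_dim_kernel:
  fixes X :: "real^'n^'n"
  assumes "transpose X = - X" and "odd CARD('n)"
  shows "\<exists>v. v \<bullet> v = 1 \<and> X *v v = 0"
proof -
  have "det X = det (- X)"
    using assms(1) det_transpose[of X] by simp
  also have "- X = (\<chi> i. (- 1) *s X $ i)"
    by (simp add: vec_eq_iff)
  also have "det \<dots> = (- 1) ^ CARD('n) * det X"
    using det_rows_mul[of "\<lambda>_. - 1" "\<lambda>i. X $ i"] by simp
  finally have "det X = 0"
    using assms(2) by simp
  then have "\<not> inj ((*v) X)"
    using det_nz_iff_inj[OF matrix_vector_mul_linear[of X]] by simp
  then obtain w where w: "w \<noteq> 0" "X *v w = 0"
    using linear_inj_iff_eq_0[OF matrix_vector_mul_linear[of X]] by blast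
  define v where "v = (1 / norm w) *\<^sub>R w"
  have "v \<bullet> v = 1"
    using w(1) by (simp add: v_def power2_norm_eq_inner[symmetric] power2_eq_square)
  moreover have "X *v v = 0"
    by (simp add: v_def w(2) matrix_vector_mult_scaleR)
  ultimately show ?thesis by blast
qed

lemma exists_unit_orthogonal:
  fixes vs :: "'a::euclidean_space list"
  assumes "length vs < DIM('a)"
  shows "\<exists>x. x \<bullet> x = 1 \<and> (\<forall>v\<in>set vs. x \<bullet> v = 0)"
proof -
  have "dim (set vs) \<le> length vs"
    using real_vector.dim_le_card'[of "set vs"] card_length[of vs] by simp
  then have "dim (set vs) < DIM('a)" using assms by simp
  then obtain x :: 'a where x: "x \<noteq> 0" "\<And>y. y \<in> span (set vs) \<Longrightarrow> orthogonal x y"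
    using orthogonal_to_subspace_exists by blast
  define y where "y = (1 / norm x) *\<^sub>R x"
  have "y \<bullet> y = 1"
    using x(1) by (simp add: y_def power2_norm_eq_inner[symmetric] power2_eq_square)
  moreover have "\<forall>v\<in>set vs. y \<bullet> v = 0"
    using x(2) by (auto simp: y_def orthogonal_def span_base)
  ultimately show ?thesis by blast
qed

section \<open>Special triples\<close>

definition special_triple :: "real^7 \<Rightarrow> real^7 \<Rightarrow> real^7 \<Rightarrow> bool" where
  "special_triple a b c \<longleftrightarrow> a \<bullet> a = 1 \<and> b \<bullet> b = 1 \<and> c \<bullet> c = 1 \<and>
     a \<bullet> b = 0 \<and> a \<bullet> c = 0 \<and> b \<bullet> c = 0 \<and> cross7 a b \<bullet> c = 0"

text \<open>Indices start at \<open>0\<close>: \<open>triple_frame a b c i\<close> is the paper's \<open>f\<^sub>i\<^sub>+\<^sub>1\<close>.\<close>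

definition triple_frame :: "real^7 \<Rightarrow> real^7 \<Rightarrow> real^7 \<Rightarrow> 7 \<Rightarrow> real^7" where
  "triple_frame a b c i =
     (if i = 0 then a else if i = 1 then b else if i = 2 then cross7 a b
      else if i = 3 then c else if i = 4 then cross7 a c else if i = 5 then cross7 b c
      else cross7 (cross7 a b) c)"

lemma triple_frame_simps [simp]:
  "triple_frame a b c 0 = a" "triple_frame a b c 1 = b" "triple_frame a b c 2 = cross7 a b"
  "triple_frame a b c 3 = c" "triple_frame a b c 4 = cross7 a c" "triple_frame a b c 5 = cross7 b c"
  "triple_frame a b c 6 = cross7 (cross7 a b) c"
  by (simp_all add: triple_frame_def)

lemma special_triple_extend:
  assumes "a \<bullet> a = 1" "b \<bullet> b = 1" "a \<bullet> b = 0"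
  shows "\<exists>c. special_triple a b c"
  using exists_unit_orthogonal[of "[a, b, cross7 a b]"] assms
  by (auto simp: special_triple_def inner_commute)

lemma special_triple_swap12: "special_triple a b c \<Longrightarrow> special_triple b a c"
  by (auto simp: special_triple_def inner_commute cross7_anticomm[of b a])

context
  fixes a b c :: "real^7"
  assumes abc: "special_triple a b c"
begin

lemma special_triple_inner:
  "a \<bullet> a = 1" "b \<bullet> b = 1" "c \<bullet> c = 1" "a \<bullet> b = 0" "a \<bullet> c = 0" "b \<bullet> c = 0"
  "b \<bullet> a = 0" "c \<bullet> a = 0" "c \<bullet> b = 0" "cross7 a b \<bullet> c = 0" "c \<bullet> cross7 a b = 0"
  using abc by (auto simp: special_triple_def inner_commute)

lemma special_cross_a_ab: "cross7 a (cross7 a b) = - b"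
  by (simp add: cross7_cross7_same special_triple_inner)

lemma special_cross_a_ac: "cross7 a (cross7 a c) = - c"
  by (simp add: cross7_cross7_same special_triple_inner)

lemma special_cross_ac_b: "cross7 (cross7 a c) b = - cross7 (cross7 a b) c"
  using cross7_cross7_sym[of a b c]
  by (simp add: special_triple_inner eq_neg_iff_add_eq_0 add.commute)

lemma special_cross_b_ac: "cross7 b (cross7 a c) = cross7 (cross7 a b) c"
  by (metis cross7_anticomm special_cross_ac_b)

lemma special_cross_ab_ac: "cross7 (cross7 a b) (cross7 a c) = - cross7 b c"
  by (simp add: cross7_cross7_common special_triple_inner)

lemma special_cross_a_bc: "cross7 a (cross7 b c) = - cross7 (cross7 a b) c"
  using cross7_assoc_defect[of a b c] by (simp add: special_triple_inner eq_neg_iff_add_eq_0)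

lemma special_cross_a_abc: "cross7 a (cross7 (cross7 a b) c) = cross7 b c"
proof -
  have "a \<bullet> cross7 b c = 0"
    using special_triple_inner(10) inner_cross7_cyclic[of a b c] by (simp add: inner_commute)
  then have "cross7 a (cross7 a (cross7 b c)) = - cross7 b c"
    by (simp add: cross7_cross7_same special_triple_inner)
  moreover have "cross7 (cross7 a b) c = - cross7 a (cross7 b c)"
    using special_cross_a_bc by simp
  ultimately show ?thesis
    by (simp add: cross7_minus_right)
qed

lemma orthonormal_frame_triple_frame: "orthonormal_frame (triple_frame a b c)"
proof -
  note inner = special_triple_inner
  have unit: "cross7 a b \<bullet> cross7 a b = 1" "cross7 a c \<bullet> cross7 a c = 1"
    "cross7 b c \<bullet> cross7 b c = 1" "cross7 (cross7 a b) c \<bullet> cross7 (cross7 a b) c = 1"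
    by (simp_all add: inner_cross7_cross7 inner)
  have o1: "b \<bullet> cross7 a c = 0" "a \<bullet> cross7 b c = 0"
    using inner(10) inner_cross7_swap[of a b c] inner_cross7_cyclic[of a b c]
    by (simp_all add: inner_commute)
  have o2: "cross7 a b \<bullet> cross7 a c = 0"
    by (simp add: inner_cross7_cross7 inner)
  have o3: "cross7 a b \<bullet> cross7 b c = 0"
    using inner_cross7_cross7[of b a c] by (simp add: inner cross7_anticomm[of b a])
  have o4: "cross7 a c \<bullet> cross7 b c = 0"
    using inner_cross7_cross7[of c a b] by (simp add: inner cross7_anticomm[of _ c])
  have o5: "a \<bullet> cross7 (cross7 a b) c = 0" "b \<bullet> cross7 (cross7 a b) c = 0"
    using o2 o3 by (metis inner_cross7_cyclic inner_commute inner_cross7_swap neg_equal_0_iff_equal)+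
  have o6: "cross7 a c \<bullet> cross7 (cross7 a b) c = 0"
    using special_cross_b_ac o1 o2 by (metis inner_cross7_right)
  have o7: "cross7 b c \<bullet> cross7 (cross7 a b) c = 0"
    using inner_cross7_cross7[of c "cross7 a b" b]
    by (simp add: inner cross7_anticomm[of _ c] o3 inner_commute)
  show ?thesis
    unfolding orthonormal_frame_def all_7 triple_frame_simps
    by (simp add: inner unit o1 o2 o3 o4 o5 o6 o7 inner_commute)
qed

lemma triple_frame_inner:
  "triple_frame a b c i \<bullet> triple_frame a b c j = (if i = j then 1 else 0)"
  using orthonormal_frame_triple_frame by (simp add: orthonormal_frame_def)

end

section \<open>Orientation of the frame of a special triple\<close>

definition frame_det :: "real^7 \<Rightarrow> real^7 \<Rightarrow> real^7 \<Rightarrow> real" where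
  "frame_det a b c = det (\<chi> i. triple_frame a b c i)"

lemma frame_det_cases:
  "special_triple a b c \<Longrightarrow> frame_det a b c = 1 \<or> frame_det a b c = - 1"
  unfolding frame_det_def
  by (intro det_orthogonal_matrix orthonormal_frame_orthogonal_matrix
      orthonormal_frame_triple_frame)

lemma det_signed_permute_rows:
  fixes A :: "real^'n^'n"
  assumes "p permutes UNIV"
  shows "det (\<chi> i. s i *\<^sub>R A $ p i) = prod s UNIV * of_int (sign p) * det A"
proof -
  have "det (\<chi> i. s i *\<^sub>R A $ p i) = prod s UNIV * det (\<chi> i. A $ p i)"
    using det_rows_mul[of s "\<lambda>i. A $ p i"] by (simp add: scalar_mult_eq_scaleR)
  then show ?thesis
    using det_permute_rows[OF assms, of A] by simp
qed

lemma frame_det_swap12: "frame_det b a c = frame_det a b c"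
proof -
  define p where "p = Transposition.transpose (0::7) 1 \<circ> Transposition.transpose 4 5"
  define s where "s = (\<lambda>i::7. if i = 2 \<or> i = 6 then - 1 else 1 :: real)"
  have p: "p permutes UNIV" and "sign p = 1"
    unfolding p_def
    by (simp_all add: permutes_compose permutes_swap_id sign_compose permutation_swap_id sign_swap_id)
  moreover have "prod s UNIV = 1"
    by (simp add: prod_7 s_def)
  moreover have "(\<chi> i. triple_frame b a c i) = (\<chi> i. s i *\<^sub>R (\<chi> i. triple_frame a b c i) $ p i)"
    unfolding vec_eq_iff all_7 by (simp add: p_def s_def cross7_anticomm[of b a] cross7_minus_left)
  then have "frame_det b a c = prod s UNIV * of_int (sign p) * frame_det a b c"
    unfolding frame_det_def by (simp only: det_signed_permute_rows[OF p])
  ultimately show ?thesis by simp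
qed

lemma frame_det_swap23:
  assumes "special_triple a b c"
  shows "frame_det a c b = frame_det a b c"
proof -
  define p where "p = Transposition.transpose (1::7) 3 \<circ> Transposition.transpose 2 4"
  define s where "s = (\<lambda>i::7. if i = 5 \<or> i = 6 then - 1 else 1 :: real)"
  have p: "p permutes UNIV" and "sign p = 1"
    unfolding p_def
    by (simp_all add: permutes_compose permutes_swap_id sign_compose permutation_swap_id sign_swap_id)
  moreover have "prod s UNIV = 1"
    by (simp add: prod_7 s_def)
  moreover have "(\<chi> i. triple_frame a c b i) = (\<chi> i. s i *\<^sub>R (\<chi> i. triple_frame a b c i) $ p i)"
    unfolding vec_eq_iff all_7
    by (simp add: p_def s_def cross7_anticomm[of c b] special_cross_ac_b[OF assms])
  then have "frame_det a c b = prod s UNIV * of_int (sign p) * frame_det a b c"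
    unfolding frame_det_def by (simp only: det_signed_permute_rows[OF p])
  ultimately show ?thesis by simp
qed

lemma frame_det_minus3: "frame_det a b (- c) = frame_det a b c"
proof -
  define s where "s = (\<lambda>i::7. if i = 0 \<or> i = 1 \<or> i = 2 then 1 else - 1 :: real)"
  have "prod s UNIV = 1"
    by (simp add: prod_7 s_def)
  moreover have "(\<chi> i. triple_frame a b (- c) i) = (\<chi> i. s i *\<^sub>R (\<chi> i. triple_frame a b c i) $ id i)"
    unfolding vec_eq_iff all_7 by (simp add: s_def cross7_minus_right)
  then have "frame_det a b (- c) = prod s UNIV * of_int (sign (id :: 7 \<Rightarrow> 7)) * frame_det a b c"
    unfolding frame_det_def by (simp only: det_signed_permute_rows[OF permutes_id])
  ultimately show ?thesis by simp
qed

lemma continuous_on_frame_det: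
  assumes "continuous_on S h"
  shows "continuous_on S (\<lambda>t. frame_det a b (h t))"
proof -
  have cross: "continuous_on S (\<lambda>t. cross7 u (h t))" for u
    using linear_continuous_on[OF linear_conv_bounded_linear[THEN iffD1, OF linear_cross7_right]]
    by (rule continuous_on_compose2[OF _ assms]) auto
  have "\<forall>i. continuous_on S (\<lambda>t. triple_frame a b (h t) i)"
    unfolding all_7 triple_frame_simps by (auto intro!: continuous_intros cross assms)
  then show ?thesis
    unfolding frame_det_def det_def by (auto intro!: continuous_intros)
qed

lemma special_triple_path:
  assumes abc: "special_triple a b c" and abc': "special_triple a b c'" and "c' \<noteq> - c"
  shows "\<exists>n :: real \<Rightarrow> real^7. continuous_on {0..1} n \<and> n 0 = c \<and> n 1 = c' \<and>
           (\<forall>t\<in>{0..1}. special_triple a b (n t))"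
proof -
  have norm_c: "norm c = 1" "norm c' = 1"
    using abc abc' by (simp_all add: special_triple_def norm_eq_sqrt_inner)
  define h where "h t = (1 - t) *\<^sub>R c + t *\<^sub>R c'" for t :: real
  have h_nonzero: "h t \<noteq> 0" if "t \<in> {0..1}" for t
  proof
    assume h0: "h t = 0"
    then have "norm ((1 - t) *\<^sub>R c) = norm (t *\<^sub>R c')"
      by (metis h_def add_diff_cancel_left' diff_zero norm_minus_commute)
    then have t_half: "t = 1 / 2"
      using that norm_c by auto
    have "(1 / 2) *\<^sub>R (c + c') = 0"
      using h0 by (simp add: h_def t_half scaleR_add_right)
    then show False
      using \<open>c' \<noteq> - c\<close> by (simp add: eq_neg_iff_add_eq_0 add.commute)
  qed
  define n where "n t = (1 / norm (h t)) *\<^sub>R h t" for t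
  have cont: "continuous_on {0..1} n"
    using h_nonzero unfolding n_def h_def by (intro continuous_intros) auto
  have ends: "n 0 = c" "n 1 = c'"
    using norm_c by (simp_all add: n_def h_def)
  have special: "special_triple a b (n t)" if "t \<in> {0..1}" for t
  proof -
    have "n t \<bullet> n t = 1"
      using h_nonzero[OF that] by (simp add: n_def power2_norm_eq_inner[symmetric] power2_eq_square)
    then show ?thesis
      using abc abc' by (simp add: special_triple_def n_def h_def inner_add_right)
  qed
  show ?thesis
    using cont ends special by blast
qed

lemma frame_det_third_indep:
  assumes abc: "special_triple a b c" and abc': "special_triple a b c'"
  shows "frame_det a b c = frame_det a b c'"
proof (cases "c' = - c")
  case True
  then show ?thesis by (simp add: frame_det_minus3)
next
  case False
  obtain n :: "real \<Rightarrow> real^7" where cont: "continuous_on {0..1} n" and ends: "n 0 = c" "n 1 = c'"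
    and special: "\<forall>t\<in>{0..1}. special_triple a b (n t)"
    using special_triple_path[OF abc abc' False] by blast
  have "(\<lambda>t. frame_det a b (n t)) ` {0..1} \<subseteq> {1, - 1}"
    using frame_det_cases special by blast
  then have "(\<lambda>t. frame_det a b (n t)) constant_on {0..1}"
    by (intro continuous_finite_range_constant connected_Icc continuous_on_frame_det[OF cont])
      (auto intro: finite_subset)
  then show ?thesis
    unfolding constant_on_def ends[symmetric] by (metis atLeastAtMost_iff order_refl zero_le_one)
qed

lemma frame_det_second_indep:
  assumes abc: "special_triple a b c" and abc': "special_triple a b' c'"
  shows "frame_det a b c = frame_det a b' c'"
proof -
  note inner = special_triple_inner[OF abc] special_triple_inner[OF abc']
  obtain d where d: "d \<bullet> d = 1" "\<forall>v\<in>set [a, b, cross7 a b, b', cross7 a b']. d \<bullet> v = 0"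
    using exists_unit_orthogonal[of "[a, b, cross7 a b, b', cross7 a b']"] by auto
  have "cross7 a d \<bullet> b = 0" "cross7 a d \<bullet> b' = 0"
    using d inner_cross7_swap[of a d b] inner_cross7_swap[of a d b'] by (simp_all add: inner_commute)
  then have abd: "special_triple a b d" and ab'd: "special_triple a b' d"
    and adb: "special_triple a d b" and adb': "special_triple a d b'"
    using inner d by (auto simp: special_triple_def inner_commute)
  have "frame_det a b c = frame_det a b d" by (rule frame_det_third_indep[OF abc abd])
  also have "\<dots> = frame_det a d b" by (rule frame_det_swap23[OF abd, symmetric])
  also have "\<dots> = frame_det a d b'" by (rule frame_det_third_indep[OF adb adb'])
  also have "\<dots> = frame_det a b' d" by (rule frame_det_swap23[OF ab'd])
  also have "\<dots> = frame_det a b' c'" by (rule frame_det_third_indep[OF ab'd abc'])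
  finally show ?thesis .
qed

text \<open>Any special triple is joined to the standard one \<open>(e\<^sub>1, e\<^sub>2, e\<^sub>4)\<close>, whose frame is the
  standard basis, by moves that change one vector at a time.\<close>

lemma frame_det_eq_1:
  assumes abc: "special_triple a b c"
  shows "frame_det a b c = 1"
proof -
  let ?e1 = "axis 0 1 :: real^7" and ?e2 = "axis 1 1 :: real^7" and ?e4 = "axis 3 1 :: real^7"
  note inner = special_triple_inner[OF abc]
  have e1: "?e1 \<bullet> ?e1 = 1" by (simp add: inner_axis_axis)
  obtain y where y: "y \<bullet> y = 1" "\<forall>v\<in>set [b, ?e1]. y \<bullet> v = 0"
    using exists_unit_orthogonal[of "[b, ?e1]"] by auto
  obtain c1 where c1: "special_triple b y c1"
    using special_triple_extend[of b y] inner y by (auto simp: inner_commute)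
  obtain c2 where c2: "special_triple y ?e1 c2"
    using special_triple_extend[of y ?e1] e1 y by auto
  have std: "special_triple ?e1 ?e2 ?e4"
    unfolding special_triple_def by (simp add: inner_axis_axis inner_vec_7 cross7_components axis_def)
  have "(\<chi> i. triple_frame ?e1 ?e2 ?e4 i) = mat 1"
    unfolding vec_eq_iff all_7 by (simp add: cross7_components mat_def axis_def)
  then have std_det: "frame_det ?e1 ?e2 ?e4 = 1"
    by (simp add: frame_det_def)
  have "frame_det a b c = frame_det b a c" by (rule frame_det_swap12[symmetric])
  also have "\<dots> = frame_det b y c1" by (rule frame_det_second_indep[OF special_triple_swap12[OF abc] c1])
  also have "\<dots> = frame_det y b c1" by (rule frame_det_swap12[symmetric])
  also have "\<dots> = frame_det y ?e1 c2" by (rule frame_det_second_indep[OF special_triple_swap12[OF c1] c2])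
  also have "\<dots> = frame_det ?e1 y c2" by (rule frame_det_swap12[symmetric])
  also have "\<dots> = frame_det ?e1 ?e2 ?e4" by (rule frame_det_second_indep[OF special_triple_swap12[OF c2] std])
  finally show ?thesis using std_det by simp
qed

section \<open>Maximal eigenvectors of symmetric maps\<close>

lemma nonneg_eq_0_if_quadratic_nonpos:
  fixes b c :: real
  assumes quad: "\<And>s. s > 0 \<Longrightarrow> 2 * s * b + s * s * c \<le> 0" and "b \<ge> 0"
  shows "b = 0"
proof (rule ccontr)
  assume "b \<noteq> 0"
  with \<open>b \<ge> 0\<close> have b: "b > 0" by simp
  define s where "s = b / (\<bar>c\<bar> + 1)"
  have s: "s > 0" using b by (simp add: s_def add_pos_nonneg)
  have "s * (2 * b + s * c) \<le> 0" using quad[OF s] by (simp add: algebra_simps)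
  then have "2 * b + s * c \<le> 0" using s by (simp add: mult_le_0_iff)
  moreover have "s * \<bar>c\<bar> < b"
  proof -
    have "s * \<bar>c\<bar> = b * (\<bar>c\<bar> / (\<bar>c\<bar> + 1))" by (simp add: s_def)
    also have "\<dots> < b * 1" using b by (intro mult_strict_left_mono) auto
    finally show ?thesis by simp
  qed
  moreover have "- (s * c) \<le> s * \<bar>c\<bar>"
    using s by (metis abs_ge_minus_self abs_mult abs_of_pos mult_minus_right)
  ultimately show False using b by linarith
qed

lemma rayleigh_max_exists:
  fixes t :: "'a::euclidean_space \<Rightarrow> 'a"
  assumes lin: "linear t" and W: "subspace W" and w0: "w0 \<in> W" "w0 \<noteq> 0"
  shows "\<exists>u\<in>W. u \<bullet> u = 1 \<and> (\<forall>w\<in>W. w \<bullet> t w \<le> (u \<bullet> t u) * (w \<bullet> w))"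
proof -
  let ?K = "W \<inter> sphere 0 1"
  have "compact ?K"
    by (intro closed_Int_compact closed_subspace[OF W] compact_sphere)
  moreover have "continuous_on ?K (\<lambda>u. u \<bullet> t u)"
    using lin by (intro continuous_intros linear_continuous_on) (simp add: linear_conv_bounded_linear)
  moreover have "(1 / norm w0) *\<^sub>R w0 \<in> ?K"
    using w0 W by (simp add: subspace_scale)
  ultimately obtain u where u: "u \<in> ?K" and max: "\<And>y. y \<in> ?K \<Longrightarrow> y \<bullet> t y \<le> u \<bullet> t u"
    using continuous_attains_sup[of ?K "\<lambda>u. u \<bullet> t u"] by blast
  have "w \<bullet> t w \<le> (u \<bullet> t u) * (w \<bullet> w)" if w: "w \<in> W" and "w \<noteq> 0" for w
  proof -
    define y where "y = (1 / norm w) *\<^sub>R w"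
    have "y \<in> ?K"
      using that W by (simp add: y_def subspace_scale)
    then have "y \<bullet> t y \<le> u \<bullet> t u"
      by (rule max)
    moreover have "y \<bullet> t y = (w \<bullet> t w) / (norm w)\<^sup>2"
      by (simp add: y_def linear_scale[OF lin] power2_eq_square)
    moreover have "w \<bullet> w = (norm w)\<^sup>2"
      by (simp add: power2_norm_eq_inner)
    ultimately show ?thesis
      using \<open>w \<noteq> 0\<close> by (simp add: divide_le_eq mult.commute)
  qed
  then have "\<forall>w\<in>W. w \<bullet> t w \<le> (u \<bullet> t u) * (w \<bullet> w)"
    using linear_0[OF lin] by fastforce
  moreover have "u \<in> W" "u \<bullet> u = 1"
    using u by (auto simp: norm_eq_1)
  ultimately show ?thesis by blast
qed

text \<open>First variation: a maximiser \<open>u\<close> of the Rayleigh quotient is an eigenvector, since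
  along \<open>u + s r\<close> with \<open>r = t u - M u\<close> the quotient would otherwise grow to first order in \<open>s\<close>.\<close>

lemma rayleigh_max_eigenvector:
  fixes t :: "'a::euclidean_space \<Rightarrow> 'a"
  assumes lin: "linear t" and sym: "\<And>u v. t u \<bullet> v = u \<bullet> t v"
    and W: "subspace W" and inv: "\<And>w. w \<in> W \<Longrightarrow> t w \<in> W"
    and u: "u \<in> W" "u \<bullet> u = 1" and max: "\<forall>w\<in>W. w \<bullet> t w \<le> (u \<bullet> t u) * (w \<bullet> w)"
  shows "t u = (u \<bullet> t u) *\<^sub>R u"
proof -
  define M where "M = u \<bullet> t u"
  define r where "r = t u - M *\<^sub>R u"
  have r: "r \<in> W"
    unfolding r_def using u inv W by (simp add: subspace_diff subspace_scale)
  have ur: "u \<bullet> r = 0" "r \<bullet> u = 0"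
    using u by (simp_all add: r_def M_def inner_diff_left inner_diff_right inner_commute)
  then have rtu: "r \<bullet> t u = r \<bullet> r"
    by (simp add: r_def inner_diff_left inner_diff_right inner_commute)
  have "2 * s * (r \<bullet> r) + s * s * (r \<bullet> t r - M * (r \<bullet> r)) \<le> 0" if "s > 0" for s
  proof -
    have "u + s *\<^sub>R r \<in> W"
      using u r W by (simp add: subspace_add subspace_scale)
    then have "(u + s *\<^sub>R r) \<bullet> t (u + s *\<^sub>R r) \<le> M * ((u + s *\<^sub>R r) \<bullet> (u + s *\<^sub>R r))"
      using max by (simp add: M_def)
    moreover have "(u + s *\<^sub>R r) \<bullet> t (u + s *\<^sub>R r) = M + 2 * s * (r \<bullet> t u) + s * s * (r \<bullet> t r)"
      using sym[of r u] by (simp add: linear_add[OF lin] linear_scale[OF lin] inner_add_left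
          inner_add_right M_def algebra_simps inner_commute)
    moreover have "(u + s *\<^sub>R r) \<bullet> (u + s *\<^sub>R r) = 1 + s * s * (r \<bullet> r)"
      using u ur by (simp add: inner_add_left inner_add_right algebra_simps)
    ultimately show ?thesis
      using u(2) ur by (simp add: rtu algebra_simps)
  qed
  then have "r \<bullet> r = 0"
    by (intro nonneg_eq_0_if_quadratic_nonpos) auto
  then show ?thesis
    by (simp add: r_def M_def)
qed

lemma symmetric_max_eigenvector_orthogonal:
  fixes t :: "'a::euclidean_space \<Rightarrow> 'a"
  assumes lin: "linear t" and sym: "\<And>u v. t u \<bullet> v = u \<bullet> t v"
    and eigen: "\<And>x. x \<in> set vs \<Longrightarrow> \<exists>l. t x = l *\<^sub>R x" and len: "length vs < DIM('a)"
  shows "\<exists>u. u \<bullet> u = 1 \<and> (\<forall>x\<in>set vs. x \<bullet> u = 0) \<and> t u = (u \<bullet> t u) *\<^sub>R u \<and>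
           (\<forall>w. (\<forall>x\<in>set vs. x \<bullet> w = 0) \<longrightarrow> w \<bullet> t w \<le> (u \<bullet> t u) * (w \<bullet> w))"
proof -
  define W where "W = {w. \<forall>x\<in>set vs. x \<bullet> w = 0}"
  have W: "subspace W"
    by (auto simp: W_def subspace_def inner_add_right)
  have inv: "t w \<in> W" if "w \<in> W" for w
  proof -
    have "x \<bullet> t w = 0" if "x \<in> set vs" for x
      using eigen[OF that] \<open>w \<in> W\<close> that sym[of x w] by (auto simp: W_def)
    then show ?thesis by (simp add: W_def)
  qed
  obtain w0 where "w0 \<bullet> w0 = 1" "\<forall>v\<in>set vs. w0 \<bullet> v = 0"
    using exists_unit_orthogonal[OF len] by blast
  then have "w0 \<in> W" "w0 \<noteq> 0"
    by (auto simp: W_def inner_commute)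
  then obtain u where u: "u \<in> W" "u \<bullet> u = 1" and max: "\<forall>w\<in>W. w \<bullet> t w \<le> (u \<bullet> t u) * (w \<bullet> w)"
    using rayleigh_max_exists[OF lin W] by blast
  moreover have "t u = (u \<bullet> t u) *\<^sub>R u"
    using rayleigh_max_eigenvector[OF lin sym W inv u max] .
  ultimately show ?thesis
    by (auto simp: W_def)
qed

section \<open>The normal form\<close>

lemma g2_skew: "X \<in> g2 \<Longrightarrow> transpose X = - X"
  by (simp add: g2_def skew_def)

lemma g2_derivation: "X \<in> g2 \<Longrightarrow> X *v cross7 v w = cross7 (X *v v) w + cross7 v (X *v w)"
  by (simp add: g2_def)

definition normal_action :: "real^7^7 \<Rightarrow> (7 \<Rightarrow> real^7) \<Rightarrow> real \<Rightarrow> real \<Rightarrow> real \<Rightarrow> bool" where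
  "normal_action X f mu nu lam \<longleftrightarrow>
     X *v f 0 = 0 \<and> X *v f 1 = - mu *\<^sub>R f 2 \<and> X *v f 2 = mu *\<^sub>R f 1 \<and>
     X *v f 3 = - nu *\<^sub>R f 4 \<and> X *v f 4 = nu *\<^sub>R f 3 \<and>
     X *v f 5 = - lam *\<^sub>R f 6 \<and> X *v f 6 = lam *\<^sub>R f 5"

lemma g2_normal_action_triple_frame:
  assumes X: "X \<in> g2" and abc: "special_triple a b c" and Xa: "X *v a = 0"
    and Xb: "X *v b = - mu *\<^sub>R cross7 a b" and Xc: "X *v c = - nu *\<^sub>R cross7 a c"
  shows "normal_action X (triple_frame a b c) mu nu (mu + nu)"
proof -
  note leibniz = g2_derivation[OF X]
  note cross_lin = cross7_scaleR_left cross7_scaleR_right cross7_minus_left cross7_minus_right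
  have Xab: "X *v cross7 a b = mu *\<^sub>R b"
    by (simp add: leibniz Xa Xb cross_lin special_cross_a_ab[OF abc])
  moreover have "X *v cross7 a c = nu *\<^sub>R c"
    by (simp add: leibniz Xa Xc cross_lin special_cross_a_ac[OF abc])
  moreover have "X *v cross7 b c = - (mu + nu) *\<^sub>R cross7 (cross7 a b) c"
    by (simp add: leibniz Xb Xc cross_lin special_cross_b_ac[OF abc] algebra_simps)
  moreover have "X *v cross7 (cross7 a b) c = cross7 (X *v cross7 a b) c + cross7 (cross7 a b) (X *v c)"
    by (rule leibniz)
  then have "X *v cross7 (cross7 a b) c = (mu + nu) *\<^sub>R cross7 b c"
    by (simp add: Xab Xc cross_lin special_cross_ab_ac[OF abc] algebra_simps)
  ultimately show ?thesis
    by (simp add: normal_action_def Xa Xb Xc)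
qed

definition twist :: "real^7^7 \<Rightarrow> real^7 \<Rightarrow> real^7 \<Rightarrow> real^7" where
  "twist X a v = cross7 a (X *v v)"

context
  fixes X :: "real^7^7" and a :: "real^7"
  assumes X: "X \<in> g2" and Xa: "X *v a = 0" and a_unit: "a \<bullet> a = 1"
begin

lemma linear_twist: "linear (twist X a)"
  unfolding twist_def
  using linear_compose[OF matrix_vector_mul_linear linear_cross7_right] by (simp add: o_def)

lemma twist_symmetric: "twist X a u \<bullet> v = u \<bullet> twist X a v"
proof -
  have "twist X a u \<bullet> v = - ((X *v u) \<bullet> cross7 a v)"
    unfolding twist_def inner_cross7_swap[of a "X *v u" v] by (simp add: inner_commute)
  also have "\<dots> = u \<bullet> (X *v cross7 a v)"
    by (simp add: skew_inner[OF g2_skew[OF X]])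
  also have "\<dots> = u \<bullet> twist X a v"
    by (simp add: g2_derivation[OF X] Xa twist_def)
  finally show ?thesis .
qed

lemma twist_cross7: "twist X a (cross7 a v) = cross7 a (twist X a v)"
  by (simp add: twist_def g2_derivation[OF X] Xa)

lemma twist_eigen_action:
  assumes "a \<bullet> u = 0" and "twist X a u = m *\<^sub>R u"
  shows "X *v u = - m *\<^sub>R cross7 a u"
proof -
  have "a \<bullet> (X *v u) = 0"
    using skew_inner[OF g2_skew[OF X], of a u] Xa by simp
  then have "cross7 a (twist X a u) = - (X *v u)"
    by (simp add: twist_def cross7_cross7_same a_unit)
  then show ?thesis
    using assms(2) by (simp add: cross7_scaleR_right)
qed

lemma twist_max_eigen_triple:
  "\<exists>b c mu nu. special_triple a b c \<and> twist X a b = mu *\<^sub>R b \<and> twist X a c = nu *\<^sub>R c \<and>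
     (\<forall>w. a \<bullet> w = 0 \<longrightarrow> w \<bullet> twist X a w \<le> nu * (w \<bullet> w)) \<and>
     (\<forall>w. a \<bullet> w = 0 \<and> c \<bullet> w = 0 \<and> cross7 a c \<bullet> w = 0 \<longrightarrow> w \<bullet> twist X a w \<le> mu * (w \<bullet> w))"
proof -
  note lin = linear_twist and sym = twist_symmetric
  have ta: "twist X a a = 0 *\<^sub>R a"
    by (simp add: twist_def Xa)
  then obtain c where c: "c \<bullet> c = 1" "a \<bullet> c = 0" and tc: "twist X a c = (c \<bullet> twist X a c) *\<^sub>R c"
    and max_c: "\<forall>w. a \<bullet> w = 0 \<longrightarrow> w \<bullet> twist X a w \<le> (c \<bullet> twist X a c) * (w \<bullet> w)"
    using symmetric_max_eigenvector_orthogonal[OF lin sym, of "[a]"] by auto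
  have "twist X a (cross7 a c) = (c \<bullet> twist X a c) *\<^sub>R cross7 a c"
    by (metis twist_cross7 tc cross7_scaleR_right)
  then have "\<forall>x\<in>set [a, c, cross7 a c]. \<exists>l. twist X a x = l *\<^sub>R x"
    using ta tc by auto
  then obtain b where b: "b \<bullet> b = 1" "a \<bullet> b = 0" "c \<bullet> b = 0" "cross7 a c \<bullet> b = 0"
    and tb: "twist X a b = (b \<bullet> twist X a b) *\<^sub>R b"
    and max_b: "\<forall>w. a \<bullet> w = 0 \<and> c \<bullet> w = 0 \<and> cross7 a c \<bullet> w = 0 \<longrightarrow>
                  w \<bullet> twist X a w \<le> (b \<bullet> twist X a b) * (w \<bullet> w)"
    using symmetric_max_eigenvector_orthogonal[OF lin sym, of "[a, c, cross7 a c]"] by auto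
  have "special_triple a b c"
    using a_unit b c inner_cross7_swap[of a c b] by (simp add: special_triple_def inner_commute)
  with tb tc max_b max_c show ?thesis
    by (intro exI[of _ b] exI[of _ c] exI[of _ "b \<bullet> twist X a b"] exI[of _ "c \<bullet> twist X a c"])
      simp
qed

lemma g2_special_triple_rates:
  "\<exists>b c mu nu. special_triple a b c \<and> X *v b = - mu *\<^sub>R cross7 a b \<and>
     X *v c = - nu *\<^sub>R cross7 a c \<and> mu \<le> nu \<and> - (mu + nu) \<le> mu"
proof -
  obtain b c mu nu where abc: "special_triple a b c" and tb: "twist X a b = mu *\<^sub>R b"
    and tc: "twist X a c = nu *\<^sub>R c"
    and max_c: "\<forall>w. a \<bullet> w = 0 \<longrightarrow> w \<bullet> twist X a w \<le> nu * (w \<bullet> w)"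
    and max_b: "\<forall>w. a \<bullet> w = 0 \<and> c \<bullet> w = 0 \<and> cross7 a c \<bullet> w = 0 \<longrightarrow>
                  w \<bullet> twist X a w \<le> mu * (w \<bullet> w)"
    using twist_max_eigen_triple by blast
  note inner = special_triple_inner[OF abc] and frame = triple_frame_inner[OF abc]
  have Xb: "X *v b = - mu *\<^sub>R cross7 a b"
    using twist_eigen_action[OF inner(4) tb] .
  have Xc: "X *v c = - nu *\<^sub>R cross7 a c"
    using twist_eigen_action[OF inner(5) tc] .
  have "mu \<le> nu"
    using max_c[rule_format, OF inner(4)] tb inner(2) by simp
  moreover have "- (mu + nu) \<le> mu"
  proof -
    have "X *v cross7 b c = - (mu + nu) *\<^sub>R cross7 (cross7 a b) c"
      using g2_normal_action_triple_frame[OF X abc Xa Xb Xc] by (simp add: normal_action_def)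
    then have "twist X a (cross7 b c) = - (mu + nu) *\<^sub>R cross7 b c"
      by (simp add: twist_def cross7_scaleR_right cross7_minus_right special_cross_a_abc[OF abc])
    moreover have "a \<bullet> cross7 b c = 0" "c \<bullet> cross7 b c = 0" "cross7 a c \<bullet> cross7 b c = 0"
      "cross7 b c \<bullet> cross7 b c = 1"
      using frame[of 0 5] frame[of 3 5] frame[of 4 5] frame[of 5 5] by simp_all
    ultimately show ?thesis
      using max_b[rule_format, of "cross7 b c"] by simp
  qed
  ultimately show ?thesis
    using abc Xb Xc by blast
qed

end

lemma g2_normal_triple:
  assumes X: "X \<in> g2"
  shows "\<exists>a b c mu nu. special_triple a b c \<and> normal_action X (triple_frame a b c) mu nu (mu + nu) \<and>
           0 \<le> mu \<and> mu \<le> nu"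
proof -
  obtain a where a: "a \<bullet> a = 1" "X *v a = 0"
    using skew_odd_dim_kernel[OF g2_skew[OF X]] by auto
  obtain b c mu nu where abc: "special_triple a b c" and Xb: "X *v b = - mu *\<^sub>R cross7 a b"
    and Xc: "X *v c = - nu *\<^sub>R cross7 a c" and "mu \<le> nu" "- (mu + nu) \<le> mu"
    using g2_special_triple_rates[OF X a(2) a(1)] by blast
  show ?thesis
  proof (cases "0 \<le> mu")
    case True
    then show ?thesis
      using g2_normal_action_triple_frame[OF X abc a(2) Xb Xc] abc \<open>mu \<le> nu\<close> by blast
  next
    case False
    have frame: "triple_frame a b c i \<bullet> triple_frame a b c j = (if i = j then 1 else 0)" for i j
      using orthonormal_frame_triple_frame[OF abc] by (simp add: orthonormal_frame_def)
    have abc': "special_triple (- a) b (cross7 b c)"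
      using frame[of 0 0] frame[of 1 1] frame[of 5 5] frame[of 0 1] frame[of 0 5] frame[of 1 5]
        frame[of 2 5]
      by (simp add: special_triple_def cross7_minus_left)
    have "X *v (- a) = 0"
      using a(2) linear_neg[OF matrix_vector_mul_linear[of X], of a] by simp
    moreover have "X *v b = - (- mu) *\<^sub>R cross7 (- a) b"
      using Xb by (simp add: cross7_minus_left)
    moreover have "X *v cross7 b c = - (mu + nu) *\<^sub>R cross7 (- a) (cross7 b c)"
      using g2_normal_action_triple_frame[OF X abc a(2) Xb Xc] special_cross_a_bc[OF abc]
      by (simp add: normal_action_def cross7_minus_left)
    ultimately have "normal_action X (triple_frame (- a) b (cross7 b c)) (- mu) (mu + nu) (- mu + (mu + nu))"
      by (rule g2_normal_action_triple_frame[OF X abc'])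
    moreover have "0 \<le> - mu" "- mu \<le> mu + nu"
      using False \<open>- (mu + nu) \<le> mu\<close> by linarith+
    ultimately show ?thesis
      using abc' by blast
  qed
qed

lemma g2_adapted_triple_frame:
  assumes "special_triple a b c"
  shows "g2_adapted (triple_frame a b c)"
  using orthonormal_frame_triple_frame[OF assms] frame_det_eq_1[OF assms]
  by (simp add: g2_adapted_def orthonormal_frame_def frame_det_def ix_values)

lemma normal_action_entries:
  assumes "orthonormal_frame f" and "normal_action X f mu nu lam"
  shows "\<forall>i\<in>{1..7}. \<forall>j\<in>{1..7}. (X *v f (ix i)) \<bullet> f (ix j) = normal_form mu nu lam i j"
  using assms unfolding ball_1_7 ix_values
  by (simp add: orthonormal_frame_def normal_action_def normal_form_def)

lemma normal_action_zero:
  assumes frame: "orthonormal_frame f" and skew: "transpose X = - X"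
    and "normal_action X f 0 0 0"
  shows "X = 0"
proof -
  have "\<forall>i. X *v f i = 0"
    using assms(3) unfolding all_7 by (simp add: normal_action_def)
  then have "{v. X *v v = 0} = span (f ` UNIV)"
    using skew_kernel_rank_frame(1)[OF frame skew, of "{}"] by simp
  moreover have "v \<in> span (f ` UNIV)" for v
    by (rule orthonormal_frame_in_span[OF frame]) simp
  ultimately show ?thesis
    by (auto simp: matrix_eq)
qed

lemma normal_action_rank_4:
  assumes frame: "orthonormal_frame f" and skew: "transpose X = - X"
    and act: "normal_action X f 0 lam lam" and "lam \<noteq> 0"
  shows "{v. X *v v = 0} = span {f 0, f 1, f 2}" and "rank X = 4"
proof -
  let ?J = "{3, 4, 5, 6} :: 7 set"
  have "f 3 \<in> range ((*v) X)" "f 4 \<in> range ((*v) X)" "f 5 \<in> range ((*v) X)" "f 6 \<in> range ((*v) X)"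
    using rotation_pair_in_range[of X "f 3" lam "f 4"] rotation_pair_in_range[of X "f 5" lam "f 6"]
      act \<open>lam \<noteq> 0\<close> by (simp_all add: normal_action_def)
  then have hit: "\<And>i. i \<in> ?J \<Longrightarrow> f i \<in> range ((*v) X)" by auto
  have "\<forall>i. i \<notin> ?J \<longleftrightarrow> i \<in> {0, 1, 2}"
    unfolding all_7 by simp
  then have compl: "- ?J = {0, 1, 2}"
    by blast
  have killed: "X *v f i = 0" if "i \<notin> ?J" for i
  proof -
    have "i = 0 \<or> i = 1 \<or> i = 2"
      using that compl by blast
    then show ?thesis
      using act by (auto simp: normal_action_def)
  qed
  show "{v. X *v v = 0} = span {f 0, f 1, f 2}" and "rank X = 4"
    using skew_kernel_rank_frame[where J = ?J, OF frame skew hit killed] compl by simp_all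
qed

lemma normal_action_rank_6:
  assumes frame: "orthonormal_frame f" and skew: "transpose X = - X"
    and act: "normal_action X f mu nu lam" and "mu \<noteq> 0" "nu \<noteq> 0" "lam \<noteq> 0"
  shows "{v. X *v v = 0} = span {f 0}" and "rank X = 6"
proof -
  let ?J = "{1, 2, 3, 4, 5, 6} :: 7 set"
  have "f 1 \<in> range ((*v) X)" "f 2 \<in> range ((*v) X)" "f 3 \<in> range ((*v) X)"
    "f 4 \<in> range ((*v) X)" "f 5 \<in> range ((*v) X)" "f 6 \<in> range ((*v) X)"
    using rotation_pair_in_range[of X "f 1" mu "f 2"] rotation_pair_in_range[of X "f 3" nu "f 4"]
      rotation_pair_in_range[of X "f 5" lam "f 6"] act \<open>mu \<noteq> 0\<close> \<open>nu \<noteq> 0\<close> \<open>lam \<noteq> 0\<close>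
    by (simp_all add: normal_action_def)
  then have hit: "\<And>i. i \<in> ?J \<Longrightarrow> f i \<in> range ((*v) X)" by auto
  have "\<forall>i. i \<notin> ?J \<longleftrightarrow> i = 0"
    unfolding all_7 by simp
  then have compl: "- ?J = {0}"
    by blast
  have killed: "X *v f i = 0" if "i \<notin> ?J" for i
  proof -
    have "i = 0"
      using that compl by blast
    then show ?thesis
      using act by (simp add: normal_action_def)
  qed
  show "{v. X *v v = 0} = span {f 0}" and "rank X = 6"
    using skew_kernel_rank_frame[where J = ?J, OF frame skew hit killed] compl by simp_all
qed

lemma span_cross7_closed:
  assumes base: "\<And>x y. x \<in> B \<Longrightarrow> y \<in> B \<Longrightarrow> cross7 x y \<in> span B"
    and x: "x \<in> span B" and y: "y \<in> span B"
  shows "cross7 x y \<in> span B"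
proof -
  have right: "cross7 x' y \<in> span B" if "x' \<in> B" for x'
  proof (rule span_induct[OF y])
    show "subspace {y. cross7 x' y \<in> span B}"
      by (auto simp: subspace_def cross7_add_right cross7_scaleR_right span_zero
          intro!: span_add span_scale)
  qed (use base[OF that] in simp)
  show ?thesis
  proof (rule span_induct[OF x])
    show "subspace {x. cross7 x y \<in> span B}"
      by (auto simp: subspace_def cross7_add_left cross7_scaleR_left span_zero
          intro!: span_add span_scale)
  qed (use right in simp)
qed

lemma associative_span_cross7:
  assumes a: "a \<bullet> a = 1" and b: "b \<bullet> b = 1" and ab: "a \<bullet> b = 0"
  shows "associative (span {a, b, cross7 a b})"
proof -
  let ?B = "{a, b, cross7 a b}"
  have ab_unit: "cross7 a b \<bullet> cross7 a b = 1"
    using a b ab by (simp add: inner_cross7_cross7)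
  have "cross7 b (cross7 b a) = - a"
    using b ab by (simp add: cross7_cross7_same inner_commute)
  then have "cross7 b (cross7 a b) = a"
    by (metis cross7_anticomm cross7_minus_right minus_minus)
  moreover have "cross7 a (cross7 a b) = - b"
    using a ab by (simp add: cross7_cross7_same)
  ultimately have "cross7 x y \<in> {0, a, b, cross7 a b, - a, - b, - cross7 a b}"
    if "x \<in> ?B" "y \<in> ?B" for x y
    using that by (auto simp: cross7_anticomm[of b a] cross7_anticomm[of "cross7 a b"])
  moreover have "{0, a, b, cross7 a b, - a, - b, - cross7 a b} \<subseteq> span ?B"
    by (simp add: span_zero span_base span_neg)
  ultimately have closed: "cross7 x y \<in> span ?B" if "x \<in> span ?B" "y \<in> span ?B" for x y
    using span_cross7_closed[OF _ that] by blast
  have "independent ?B"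
    using a b ab ab_unit
    by (intro pairwise_orthogonal_independent) (auto simp: pairwise_def orthogonal_def inner_commute)
  moreover have "a \<noteq> cross7 a b" "b \<noteq> cross7 a b"
    using a b by (metis inner_cross7_left inner_cross7_right zero_neq_one)+
  then have "card ?B = 3"
    using a ab by (auto simp: card_insert_if)
  ultimately have "dim (span ?B) = 3"
    by (simp add: dim_eq_card_independent)
  then show ?thesis
    unfolding associative_def using closed by simp
qed

theorem corollary3p7:
  fixes X :: "real^7^7"
  assumes "X \<in> g2"
  shows "\<exists>f lam nu mu. g2_adapted f \<and> lam \<ge> nu \<and> nu \<ge> mu \<and> mu \<ge> 0 \<and> lam = nu + mu \<and>
     (\<forall>i\<in>{1..7}. \<forall>j\<in>{1..7}. (X *v f (ix i)) \<bullet> f (ix j) = normal_form mu nu lam i j) \<and>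
     (lam = mu \<or> (lam > 0 \<and> mu = 0) \<or> (lam > mu \<and> mu > 0)) \<and>
     (lam = mu \<longrightarrow> lam = 0 \<and> mu = 0 \<and> nu = 0 \<and> X = 0) \<and>
     (lam > 0 \<and> mu = 0 \<longrightarrow> lam = nu \<and> rank X = 4 \<and>
        {v. X *v v = 0} = span {f (ix 1), f (ix 2), f (ix 3)} \<and>
        associative (span {f (ix 1), f (ix 2), f (ix 3)})) \<and>
     (lam > mu \<and> mu > 0 \<longrightarrow> rank X = 6 \<and> {v. X *v v = 0} = span {f (ix 1)})"
proof -
  obtain a b c mu nu where abc: "special_triple a b c"
    and act: "normal_action X (triple_frame a b c) mu nu (mu + nu)" and "0 \<le> mu" "mu \<le> nu"
    using g2_normal_triple[OF assms] by blast
  let ?f = "triple_frame a b c"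
  note frame = orthonormal_frame_triple_frame[OF abc] and skew = g2_skew[OF assms]
  have first: "?f (ix 1) = a" "?f (ix 2) = b" "?f (ix 3) = cross7 a b"
    by (simp_all add: ix_values)
  have zero: "mu + nu = mu \<longrightarrow> mu + nu = 0 \<and> mu = 0 \<and> nu = 0 \<and> X = 0"
    using normal_action_zero[OF frame skew] act \<open>0 \<le> mu\<close> \<open>mu \<le> nu\<close> by auto
  have rank_4: "mu + nu > 0 \<and> mu = 0 \<longrightarrow> mu + nu = nu \<and> rank X = 4 \<and>
      {v. X *v v = 0} = span {?f (ix 1), ?f (ix 2), ?f (ix 3)} \<and>
      associative (span {?f (ix 1), ?f (ix 2), ?f (ix 3)})"
    using normal_action_rank_4[OF frame skew, of nu] act associative_span_cross7[of a b]
      special_triple_inner[OF abc] unfolding first by auto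
  have rank_6: "mu + nu > mu \<and> mu > 0 \<longrightarrow> rank X = 6 \<and> {v. X *v v = 0} = span {?f (ix 1)}"
    using normal_action_rank_6[OF frame skew act] \<open>mu \<le> nu\<close> unfolding first by auto
  have cases: "mu + nu = mu \<or> (mu + nu > 0 \<and> mu = 0) \<or> (mu + nu > mu \<and> mu > 0)"
    using \<open>0 \<le> mu\<close> \<open>mu \<le> nu\<close> by auto
  show ?thesis
    by (intro exI[of _ ?f] exI[of _ "mu + nu"] exI[of _ nu] exI[of _ mu] conjI
        g2_adapted_triple_frame[OF abc] normal_action_entries[OF frame act] cases zero rank_4 rank_6)
      (use \<open>0 \<le> mu\<close> \<open>mu \<le> nu\<close> in linarith)+
qed

end
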